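(* Let $\alpha>0$ and $\beta\in\mathbb{R}$ satisfy one of: $\beta<\alpha<1$; or $\beta<1<\alpha$; or $\beta<\alpha=1$. Then the generalized $\beta$-Ces\`aro operator $C_{g_\beta}$ is a compact linear operator from $(\mathcal{B}_\alpha^0,\|\cdot\|_{\mathcal{B}_\alpha})$ to itself.
   Context: $\mathbb{D}=\{z\in\mathbb{C}:|z|<1\}$. For $\alpha>0$, the $\alpha$-Bloch space $\mathcal{B}_\alpha$ is the space of analytic functions $f$ on $\mathbb{D}$ with $\|f\|_{\mathcal{B}_\alpha}:=\sup_{z\in\mathbb{D}}(1-|z|^2)^\alpha|f'(z)|<\infty$. $\mathcal{B}_\alpha^0=\{f\in\mathcal{B}_\alpha: f(0)=0\}$, normed by $\|\cdot\|_{\mathcal{B}_\alpha}$. For $\beta\in\mathbb{R}$, let $g_\beta(w)=\sum_{j=1}^k\frac{a_j}{(1-b_jw)^\beta}+h(w)$, where $k\ge1$, $b_1,\dots,b_k$ are distinct points of the unit circle, $a_j\in\mathbb{C}$ with $|a_j|>0$, $h$ is a bounded analytic function on $\mathbb{D}$, and powers are principal branches. The generalized $\beta$-Ces\`aro operator is $C_{g_\beta}(f)(z)=\int_0^z\frac{f(w)g_\beta(w)}{w}\,dw$ for analytic $f$ on $\mathbb{D}$ with $f(0)=0$. *)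

theory Defs
  imports "HOL-Complex_Analysis.Complex_Analysis"
begin

definition bloch_norm :: "real \<Rightarrow> (complex \<Rightarrow> complex) \<Rightarrow> real" where
  "bloch_norm \<alpha> f = (SUP z\<in>ball 0 1. (1 - (norm z)\<^sup>2) powr \<alpha> * norm (deriv f z))"

definition bloch_space :: "real \<Rightarrow> (complex \<Rightarrow> complex) set" where
  "bloch_space \<alpha> = {f. f holomorphic_on ball 0 1 \<and>
       bdd_above ((\<lambda>z. (1 - (norm z)\<^sup>2) powr \<alpha> * norm (deriv f z)) ` ball 0 1)}"

definition bloch0_space :: "real \<Rightarrow> (complex \<Rightarrow> complex) set" where
  "bloch0_space \<alpha> = {f \<in> bloch_space \<alpha>. f 0 = 0}"

definition g_beta :: "real \<Rightarrow> nat \<Rightarrow> (nat \<Rightarrow> complex) \<Rightarrow> (nat \<Rightarrow> complex)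
                      \<Rightarrow> (complex \<Rightarrow> complex) \<Rightarrow> complex \<Rightarrow> complex" where
  "g_beta \<beta> k a b h w = (\<Sum>j=1..k. a j / (1 - b j * w) powr (of_real \<beta>)) + h w"

definition cesaro_op :: "(complex \<Rightarrow> complex) \<Rightarrow> (complex \<Rightarrow> complex) \<Rightarrow> complex \<Rightarrow> complex" where
  "cesaro_op g f z = contour_integral (linepath 0 z) (\<lambda>w. f w * g w / w)"

definition compact_linear_operator_on ::
  "(complex \<Rightarrow> complex) set \<Rightarrow> ((complex \<Rightarrow> complex) \<Rightarrow> real)
     \<Rightarrow> ((complex \<Rightarrow> complex) \<Rightarrow> (complex \<Rightarrow> complex)) \<Rightarrow> bool" where
  "compact_linear_operator_on X N T \<longleftrightarrow>
     (\<forall>f\<in>X. T f \<in> X) \<and>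
     (\<forall>f\<in>X. \<forall>g\<in>X. \<forall>c d :: complex.
        (\<forall>z\<in>ball 0 1. T (\<lambda>w. c * f w + d * g w) z = c * T f z + d * T g z)) \<and>
     (\<forall>fs :: nat \<Rightarrow> complex \<Rightarrow> complex. (\<forall>n. fs n \<in> X) \<and> bdd_above (range (\<lambda>n. N (fs n))) \<longrightarrow>
        (\<exists>(r :: nat \<Rightarrow> nat) F. strict_mono r \<and> F \<in> X \<and> (\<lambda>n. N (T (fs (r n)) - F)) \<longlonglongrightarrow> 0))"

end

theory Submission
  imports Defs
begin

text \<open>Every \<open>f \<in> bloch0_space \<alpha>\<close> satisfies \<open>|f z| \<le> K (1 - |z|) powr -\<gamma>\<close> for each
  \<open>\<gamma> > 0\<close> with \<open>\<alpha> \<le> \<gamma> + 1\<close>, and \<open>g_beta\<close> grows like \<open>(1 - |z|) powr -\<beta>\<^sup>+\<close>, where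
  \<open>\<beta>\<^sup>+ = max \<beta> 0\<close>. Since \<open>(C\<^sub>g f)' z = (f z / z) g z\<close> and, by Schwarz's lemma, \<open>f z / z\<close>
  obeys the same growth bound as \<open>f\<close>, the weighted derivative
  \<open>(1 - |z|\<^sup>2) powr \<alpha> |(C\<^sub>g f)' z|\<close> is \<open>O((1 - |z|) powr (\<alpha> - \<gamma> - \<beta>\<^sup>+))\<close>. The hypotheses
  leave room for a \<open>\<gamma>\<close> with \<open>\<gamma> + \<beta>\<^sup>+ < \<alpha>\<close>, so this tends to \<open>0\<close> at the boundary.
  By Montel's theorem a bounded sequence has a locally uniformly convergent subsequence; its images
  converge in norm, by uniform convergence on a disc \<open>|z| \<le> R\<close> and by the decay near the
  boundary.\<close>

definition div_by_z :: "(complex \<Rightarrow> complex) \<Rightarrow> complex \<Rightarrow> complex" where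
  "div_by_z f z = (if z = 0 then deriv f 0 else f z / z)"

lemma holomorphic_div_by_z:
  assumes "f holomorphic_on ball 0 1" and "f 0 = 0"
  shows "div_by_z f holomorphic_on ball 0 1"
proof -
  have "(\<lambda>z. if z = 0 then deriv f 0 else (f z - f 0) / (z - 0)) holomorphic_on ball 0 1"
    by (rule pole_lemma_open[OF assms(1) open_ball])
  moreover have "(\<lambda>z. if z = 0 then deriv f 0 else (f z - f 0) / (z - 0)) = div_by_z f"
    using assms(2) by (simp add: div_by_z_def fun_eq_iff)
  ultimately show ?thesis
    by simp
qed

lemma div_by_z_diff:
  assumes "f holomorphic_on ball 0 1" "g holomorphic_on ball 0 1"
  shows "div_by_z (\<lambda>w. f w - g w) z = div_by_z f z - div_by_z g z"
proof (cases "z = 0")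
  case True
  have "f field_differentiable at 0" "g field_differentiable at 0"
    using assms holomorphic_on_imp_differentiable_at[of _ "ball 0 1" 0] by auto
  then show ?thesis
    using True by (simp add: div_by_z_def deriv_diff)
qed (simp add: div_by_z_def diff_divide_distrib)

text \<open>Schwarz's lemma, applied to \<open>f (r w) / (B + \<epsilon> r)\<close> for every \<open>\<epsilon> > 0\<close>.\<close>
lemma norm_div_by_z_le:
  fixes f :: "complex \<Rightarrow> complex"
  assumes holf: "f holomorphic_on ball 0 r" and f0: "f 0 = 0" and r: "r > 0"
    and bound: "\<And>w. w \<in> ball 0 r \<Longrightarrow> norm (f w) \<le> B" and z: "z \<in> ball 0 r"
  shows "norm (div_by_z f z) \<le> B / r"
proof (rule field_le_epsilon)
  fix \<epsilon> :: real assume \<epsilon>: "\<epsilon> > 0"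
  have B: "B \<ge> 0"
    using bound[of 0] r by (simp add: order_trans[OF norm_ge_zero])
  define c where "c = B + \<epsilon> * r"
  have c: "c > 0" using add_nonneg_pos[OF B mult_pos_pos[OF \<epsilon> r]] by (simp add: c_def)
  define F where "F = (\<lambda>w. f (of_real r * w) / of_real c)"
  have holF: "F holomorphic_on ball 0 1"
    unfolding F_def
    by (rule holomorphic_intros holomorphic_on_compose_gen[where g=f, unfolded o_def, OF _ holf]
        | use r c in \<open>auto simp: norm_mult\<close>)+
  have F_lt_1: "norm (F w) < 1" if "norm w < 1" for w
  proof -
    have "norm (f (of_real r * w)) \<le> B"
      using that r by (intro bound) (simp add: norm_mult)
    moreover have "B < c" using \<epsilon> r by (simp add: c_def)
    ultimately show ?thesis using c by (simp add: F_def norm_divide)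
  qed
  have F0: "F 0 = 0" using f0 by (simp add: F_def)
  have "norm (div_by_z f z) * r / c \<le> 1"
  proof (cases "z = 0")
    case True
    have "(f has_field_derivative deriv f 0) (at 0)"
      using r by (intro holomorphic_derivI[OF holf open_ball]) simp
    then have "(F has_field_derivative deriv f 0 * of_real r / of_real c) (at 0)"
      unfolding F_def using c by (auto intro!: derivative_eq_intros DERIV_chain2[where f=f] simp: mult_ac)
    then have "deriv F 0 = deriv f 0 * of_real r / of_real c"
      by (rule DERIV_imp_deriv)
    with Schwarz_Lemma(2)[OF holF F0 F_lt_1, where \<xi>=0] show ?thesis
      using True r c by (simp add: div_by_z_def norm_divide norm_mult)
  next
    case False
    have "norm (z / of_real r) < 1" using z r by (simp add: norm_divide)
    from Schwarz_Lemma(1)[OF holF F0 F_lt_1 this] show ?thesis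
      using False r c by (simp add: F_def div_by_z_def norm_divide field_simps)
  qed
  then show "norm (div_by_z f z) \<le> B / r + \<epsilon>"
    using r c by (simp add: c_def field_simps)
qed

lemma norm_div_by_z_le_twice:
  assumes hol: "d holomorphic_on ball 0 1" and d0: "d 0 = 0" and z: "norm z < 1"
    and bound: "\<And>w. norm w < (1 + norm z) / 2 \<Longrightarrow> norm (d w) \<le> B"
  shows "norm (div_by_z d z) \<le> 2 * B"
proof -
  define r where "r = (1 + norm z) / 2"
  have r: "1 / 2 \<le> r" "r < 1" "norm z < r"
    using z by (auto simp: r_def)
  have B: "B \<ge> 0"
    using bound[of 0] d0 r by (simp add: r_def add_pos_nonneg)
  have "norm (div_by_z d z) \<le> B / r"
  proof (rule norm_div_by_z_le[where f=d])
    show "d holomorphic_on ball 0 r"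
      using r by (intro holomorphic_on_subset[OF hol]) auto
  qed (use r bound d0 in \<open>auto simp: r_def add_pos_nonneg\<close>)
  also have "\<dots> \<le> 2 * B"
    using r B mult_left_mono[of 1 "2 * r" B] by (simp add: field_simps)
  finally show ?thesis .
qed

lemma norm_div_by_z_le_growth:
  assumes hol: "d holomorphic_on ball 0 1" and d0: "d 0 = 0" and \<gamma>: "\<gamma> \<ge> 0"
    and growth: "\<And>w. w \<in> ball 0 1 \<Longrightarrow> norm (d w) \<le> K * (1 - norm w) powr (-\<gamma>)"
    and z: "norm z < 1"
  shows "norm (div_by_z d z) \<le> 2 powr (\<gamma> + 1) * K * (1 - norm z) powr (-\<gamma>)"
proof -
  have K: "K \<ge> 0"
    using growth[of 0] d0 by simp
  define r where "r = (1 + norm z) / 2"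
  have "norm (div_by_z d z) \<le> 2 * (K * (1 - r) powr (-\<gamma>))"
  proof (rule norm_div_by_z_le_twice[OF hol d0 z])
    fix w :: complex assume "norm w < (1 + norm z) / 2"
    then have w: "norm w < 1" "1 - r \<le> 1 - norm w"
      using z by (auto simp: r_def)
    have "norm (d w) \<le> K * (1 - norm w) powr (-\<gamma>)"
      using w by (intro growth) simp
    also have "\<dots> \<le> K * (1 - r) powr (-\<gamma>)"
      using w z \<gamma> K by (intro mult_left_mono powr_mono2') (auto simp: r_def)
    finally show "norm (d w) \<le> K * (1 - r) powr (-\<gamma>)" .
  qed
  also have "(1 - r) powr (-\<gamma>) = 2 powr \<gamma> * (1 - norm z) powr (-\<gamma>)"
    using z by (simp add: r_def powr_divide powr_minus field_simps)
  finally show ?thesis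
    by (simp add: powr_add mult_ac)
qed

lemma powr_one_minus_norm_sq_bounds:
  fixes z :: complex
  assumes "norm z < 1" "0 \<le> \<alpha>"
  shows "(1 - (norm z)\<^sup>2) powr \<alpha> \<le> 2 powr \<alpha> * (1 - norm z) powr \<alpha>"
    and "(1 - norm z) powr \<alpha> \<le> (1 - (norm z)\<^sup>2) powr \<alpha>"
proof -
  have sq: "1 - (norm z)\<^sup>2 = (1 - norm z) * (1 + norm z)"
    by (simp add: power2_eq_square algebra_simps)
  have "(1 - (norm z)\<^sup>2) powr \<alpha> \<le> ((1 - norm z) * 2) powr \<alpha>"
    unfolding sq using assms by (intro powr_mono2 mult_left_mono) auto
  also have "\<dots> = 2 powr \<alpha> * (1 - norm z) powr \<alpha>"
    using assms by (subst powr_mult) (auto simp: mult.commute)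
  finally show "(1 - (norm z)\<^sup>2) powr \<alpha> \<le> 2 powr \<alpha> * (1 - norm z) powr \<alpha>" .
  show "(1 - norm z) powr \<alpha> \<le> (1 - (norm z)\<^sup>2) powr \<alpha>"
    unfolding sq using assms by (intro powr_mono2) (auto simp: mult_le_cancel_left1)
qed

lemma norm_deriv_le_of_weighted_bound:
  fixes w :: complex
  assumes w: "norm w < 1" and \<alpha>: "0 \<le> \<alpha>" "\<alpha> \<le> \<gamma> + 1"
    and bound: "(1 - (norm w)\<^sup>2) powr \<alpha> * norm (deriv f w) \<le> M"
  shows "norm (deriv f w) \<le> M * (1 - norm w) powr (-\<gamma> - 1)"
proof -
  have "(1 - norm w) powr (\<gamma> + 1) \<le> (1 - norm w) powr \<alpha>"
    using w \<alpha> by (intro powr_mono') auto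
  also have "\<dots> \<le> (1 - (norm w)\<^sup>2) powr \<alpha>"
    using powr_one_minus_norm_sq_bounds(2)[OF w \<alpha>(1)] .
  finally have "(1 - norm w) powr (\<gamma> + 1) * norm (deriv f w) \<le> M"
    using bound by (meson mult_right_mono norm_ge_zero order_trans)
  then have "norm (deriv f w) \<le> M / (1 - norm w) powr (\<gamma> + 1)"
    using w by (simp add: field_simps)
  also have "\<dots> = M * (1 - norm w) powr (-(\<gamma> + 1))"
    by (simp only: powr_minus divide_inverse)
  also have "-(\<gamma> + 1) = -\<gamma> - 1"
    by simp
  finally show ?thesis .
qed

lemma has_vector_derivative_radial:
  assumes "f holomorphic_on S" "open S" "t *\<^sub>R z \<in> S"
  shows "((\<lambda>t. f (t *\<^sub>R z)) has_vector_derivative z * deriv f (t *\<^sub>R z)) (at t)"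
proof -
  have "((\<lambda>t. t *\<^sub>R z) has_vector_derivative z) (at t)"
    by (auto intro!: derivative_eq_intros)
  moreover have "(f has_field_derivative deriv f (t *\<^sub>R z)) (at (t *\<^sub>R z))"
    using assms by (rule holomorphic_derivI)
  ultimately show ?thesis
    using field_vector_diff_chain_at by (force simp: o_def)
qed

text \<open>Compare \<open>f\<close> along the radius \<open>[0, z]\<close> with \<open>M / \<gamma> * (1 - t |z|) powr -\<gamma>\<close>
  by the mean value inequality.\<close>
lemma norm_le_of_deriv_growth:
  fixes f :: "complex \<Rightarrow> complex"
  assumes holf: "f holomorphic_on ball 0 1" and f0: "f 0 = 0" and \<gamma>: "\<gamma> > 0"
    and bound: "\<And>w. w \<in> ball 0 1 \<Longrightarrow> norm (deriv f w) \<le> M * (1 - norm w) powr (-\<gamma> - 1)"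
    and z: "norm z < 1"
  shows "norm (f z) \<le> M / \<gamma> * (1 - norm z) powr (-\<gamma>)"
proof -
  define a where "a = norm z"
  have a: "0 \<le> a" "a < 1" using z by (auto simp: a_def)
  have M: "M \<ge> 0" using bound[of 0] by (simp add: order_trans[OF norm_ge_zero])
  have on_radius: "t * a < 1" "norm (t *\<^sub>R z) = t * a" "t *\<^sub>R z \<in> ball 0 1"
    if "0 \<le> t" "t \<le> 1" for t
    using that a mult_left_le_one_le[of a t] by (auto simp: a_def)
  define \<phi> where "\<phi> = (\<lambda>t::real. M / \<gamma> * (1 - t * a) powr (-\<gamma>))"
  have "continuous_on {0..1} (\<lambda>t. f (t *\<^sub>R z))"
    using on_radius
    by (intro continuous_on_compose2[OF holomorphic_on_imp_continuous_on[OF holf]])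
       (auto intro!: continuous_intros)
  moreover have "continuous_on {0..1} \<phi>"
    unfolding \<phi>_def by (auto intro!: continuous_intros) (use on_radius(1) \<gamma> in force)+
  moreover have "((\<lambda>t. f (t *\<^sub>R z)) has_vector_derivative z * deriv f (t *\<^sub>R z)) (at t)"
    if "0 < t" "t < 1" for t
    using on_radius(3)[of t] that by (intro has_vector_derivative_radial[OF holf open_ball]) auto
  moreover have "(\<phi> has_vector_derivative M * a * (1 - t * a) powr (-\<gamma> - 1)) (at t)"
    if "0 < t" "t < 1" for t
  proof -
    have "(\<phi> has_real_derivative M / \<gamma> * (-\<gamma> * (1 - t * a) powr (-\<gamma> - 1) * (0 - 1 * a))) (at t)"
      unfolding \<phi>_def using on_radius[of t] that by (intro derivative_eq_intros refl) auto
    then show ?thesis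
      using \<gamma> by (simp add: has_real_derivative_iff_has_vector_derivative field_simps)
  qed
  moreover have "norm (z * deriv f (t *\<^sub>R z)) \<le> M * a * (1 - t * a) powr (-\<gamma> - 1)"
    if "0 < t" "t < 1" for t
  proof -
    have "norm (deriv f (t *\<^sub>R z)) \<le> M * (1 - t * a) powr (-\<gamma> - 1)"
      using bound[OF on_radius(3)[of t]] on_radius(2)[of t] that by simp
    from mult_left_mono[OF this, of a] a show ?thesis
      by (simp add: norm_mult a_def mult_ac)
  qed
  ultimately have "norm (f (1 *\<^sub>R z) - f (0 *\<^sub>R z)) \<le> \<phi> 1 - \<phi> 0"
    by (rule differentiable_bound_general[OF zero_less_one])
  moreover have "0 \<le> M / \<gamma>"
    using M \<gamma> by simp
  ultimately show ?thesis
    using f0 by (simp add: \<phi>_def a_def)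
qed

lemma weighted_deriv_le_bloch_norm:
  assumes "f \<in> bloch_space \<alpha>" "z \<in> ball 0 1"
  shows "(1 - (norm z)\<^sup>2) powr \<alpha> * norm (deriv f z) \<le> bloch_norm \<alpha> f"
  using assms unfolding bloch_space_def bloch_norm_def by (auto intro: cSUP_upper)

lemma bloch_norm_le:
  assumes "\<And>z. z \<in> ball 0 1 \<Longrightarrow> (1 - (norm z)\<^sup>2) powr \<alpha> * norm (deriv f z) \<le> B"
  shows "0 \<le> bloch_norm \<alpha> f" and "bloch_norm \<alpha> f \<le> B"
proof -
  have "bdd_above ((\<lambda>z. (1 - (norm z)\<^sup>2) powr \<alpha> * norm (deriv f z)) ` ball 0 1)"
    using assms by (rule bdd_aboveI2)
  then have "norm (deriv f 0) \<le> bloch_norm \<alpha> f"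
    unfolding bloch_norm_def using cSUP_upper[of 0 "ball 0 1"] by fastforce
  then show "0 \<le> bloch_norm \<alpha> f"
    using norm_ge_zero order_trans by blast
  show "bloch_norm \<alpha> f \<le> B"
    unfolding bloch_norm_def by (rule cSUP_least) (use assms in auto)
qed

lemma bloch0_growth:
  assumes "f \<in> bloch0_space \<alpha>" "0 \<le> \<alpha>" "\<alpha> \<le> \<gamma> + 1" "\<gamma> > 0" "w \<in> ball 0 1"
  shows "norm (f w) \<le> bloch_norm \<alpha> f / \<gamma> * (1 - norm w) powr (-\<gamma>)"
  using assms weighted_deriv_le_bloch_norm[of f \<alpha>]
  by (intro norm_le_of_deriv_growth norm_deriv_le_of_weighted_bound[where \<alpha>=\<alpha>])
     (auto simp: bloch0_space_def bloch_space_def)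

lemma one_minus_mult_bounds:
  fixes b w :: complex
  assumes "norm b \<le> 1" "norm w < 1"
  shows "1 - norm w \<le> norm (1 - b * w)" "norm (1 - b * w) \<le> 2" "1 - b * w \<notin> \<real>\<^sub>\<le>\<^sub>0"
proof -
  have bw': "norm (b * w) \<le> norm w"
    using assms by (simp add: norm_mult mult_left_le_one_le)
  then have bw: "norm (b * w) < 1"
    using assms(2) by linarith
  show "1 - norm w \<le> norm (1 - b * w)"
    using norm_triangle_ineq2[of 1 "b * w"] bw' by simp
  show "norm (1 - b * w) \<le> 2"
    using norm_triangle_ineq4[of 1 "b * w"] bw by simp
  have "Re (b * w) < 1"
    using complex_Re_le_cmod[of "b * w"] bw by linarith
  then show "1 - b * w \<notin> \<real>\<^sub>\<le>\<^sub>0"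
    by (auto simp: complex_nonpos_Reals_iff)
qed

lemma holomorphic_g_beta:
  assumes "\<forall>j\<in>{1..k}. norm (b j) \<le> 1" and "h holomorphic_on ball 0 1"
  shows "g_beta \<beta> k a b h holomorphic_on ball 0 1"
proof -
  have "1 - b j * w \<notin> \<real>\<^sub>\<le>\<^sub>0" "1 - b j * w \<noteq> 0" if "j \<in> {1..k}" "w \<in> ball 0 1" for j w
    using one_minus_mult_bounds(3)[of "b j" w] assms(1) that by auto
  then have "(\<lambda>w. (\<Sum>j=1..k. a j / (1 - b j * w) powr of_real \<beta>) + h w) holomorphic_on ball 0 1"
    by (intro holomorphic_intros assms(2)) (auto simp: powr_def)
  then show ?thesis
    by (simp add: g_beta_def[abs_def])
qed

lemma norm_inverse_powr_le:
  fixes b w :: complex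
  assumes b: "norm b \<le> 1" and w: "norm w < 1"
  shows "norm (1 / (1 - b * w) powr of_real \<beta>) \<le> max 1 (2 powr -\<beta>) * (1 - norm w) powr (- max \<beta> 0)"
proof -
  define s where "s = 1 - norm w"
  define n where "n = norm (1 - b * w)"
  have s: "0 < s" "s \<le> 1" and n: "s \<le> n" "n \<le> 2"
    using one_minus_mult_bounds[OF b w] w by (auto simp: s_def n_def)
  have "norm (1 / (1 - b * w) powr of_real \<beta>) = 1 / n powr \<beta>"
    by (simp add: norm_divide norm_powr_real_powr' n_def)
  also have "\<dots> \<le> max 1 (2 powr -\<beta>) * s powr (- max \<beta> 0)"
  proof (cases "\<beta> \<ge> 0")
    case True
    have "1 / n powr \<beta> \<le> 1 / s powr \<beta>"
      using True s n by (intro divide_left_mono powr_mono2 mult_pos_pos) auto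
    also have "\<dots> \<le> max 1 (2 powr -\<beta>) * s powr (- max \<beta> 0)"
      using True s by (auto simp: powr_minus_divide intro!: divide_right_mono)
    finally show ?thesis .
  next
    case False
    have "1 / n powr \<beta> = n powr -\<beta>"
      by (simp add: powr_minus_divide)
    also have "\<dots> \<le> 2 powr -\<beta>"
      using False n s by (intro powr_mono2) auto
    finally show ?thesis
      using False s by simp
  qed
  finally show ?thesis
    by (simp add: s_def)
qed

lemma g_beta_growth:
  assumes b: "\<forall>j\<in>{1..k}. norm (b j) \<le> 1" and h: "bounded (h ` ball 0 1)"
  obtains C where "\<And>w. w \<in> ball 0 1 \<Longrightarrow> norm (g_beta \<beta> k a b h w) \<le> C * (1 - norm w) powr (- max \<beta> 0)"
proof -
  obtain B where B: "\<And>w. w \<in> ball 0 1 \<Longrightarrow> norm (h w) \<le> B"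
    using h unfolding bounded_iff by blast
  have "B \<ge> 0"
    using B[of 0] by (simp add: order_trans[OF norm_ge_zero])
  define K where "K = max 1 (2 powr -\<beta>)"
  define C where "C = (\<Sum>j=1..k. norm (a j)) * K + B"
  have "norm (g_beta \<beta> k a b h w) \<le> C * (1 - norm w) powr (- max \<beta> 0)"
    if w: "w \<in> ball 0 1" for w
  proof -
    define S where "S = (1 - norm w) powr (- max \<beta> 0)"
    have "1 \<le> S"
      using w by (simp add: S_def powr_minus_divide powr_le1)
    have summand: "norm (a j / (1 - b j * w) powr of_real \<beta>) \<le> norm (a j) * K * S"
      if "j \<in> {1..k}" for j
    proof -
      have "norm (a j / (1 - b j * w) powr of_real \<beta>) = norm (a j) * norm (1 / (1 - b j * w) powr of_real \<beta>)"
        by (simp add: norm_divide)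
      also have "\<dots> \<le> norm (a j) * (K * S)"
        using norm_inverse_powr_le[of "b j" w \<beta>] b that w
        by (intro mult_left_mono) (auto simp: S_def K_def)
      finally show ?thesis
        by (simp add: mult.assoc)
    qed
    have "norm (g_beta \<beta> k a b h w) \<le> (\<Sum>j=1..k. norm (a j / (1 - b j * w) powr of_real \<beta>)) + norm (h w)"
      unfolding g_beta_def by (rule order_trans[OF norm_triangle_ineq add_right_mono[OF norm_sum]])
    also have "\<dots> \<le> (\<Sum>j=1..k. norm (a j) * K * S) + B * S"
      using B[OF w] \<open>1 \<le> S\<close> \<open>B \<ge> 0\<close>
      by (intro add_mono sum_mono summand) (auto simp: order_trans[OF _ mult_le_cancel_left1[THEN iffD2]])
    finally show ?thesis
      by (simp add: C_def S_def sum_distrib_right distrib_right)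
  qed
  then show ?thesis
    using that by blast
qed

text \<open>Since \<open>f w * G w / w = div_by_z f w * G w\<close> off \<open>0\<close>, the Cesaro integral of \<open>f\<close>
  is the increment of a primitive of the holomorphic function \<open>div_by_z f * G\<close>.\<close>
lemma cesaro_op_primitive:
  assumes holf: "f holomorphic_on ball 0 1" and f0: "f 0 = 0" and holG: "G holomorphic_on ball 0 1"
  obtains P where "\<And>z. z \<in> ball 0 1 \<Longrightarrow> (P has_field_derivative div_by_z f z * G z) (at z)"
    and "\<And>z. z \<in> ball 0 1 \<Longrightarrow> ((\<lambda>w. f w * G w / w) has_contour_integral (P z - P 0)) (linepath 0 z)"
proof -
  have "(\<lambda>w. div_by_z f w * G w) holomorphic_on ball 0 1"
    by (intro holomorphic_intros holomorphic_div_by_z holf f0 holG)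
  then obtain P where P: "\<And>z. z \<in> ball 0 1 \<Longrightarrow> (P has_field_derivative div_by_z f z * G z) (at z within ball 0 1)"
    using holomorphic_convex_primitive'[OF convex_ball open_ball] by blast
  show ?thesis
  proof
    show "(P has_field_derivative div_by_z f z * G z) (at z)" if "z \<in> ball 0 1" for z
      using P[OF that] at_within_open[OF that open_ball] by simp
    show "((\<lambda>w. f w * G w / w) has_contour_integral (P z - P 0)) (linepath 0 z)"
      if z: "z \<in> ball 0 1" for z
    proof (cases "z = 0")
      case False
      have "path_image (linepath 0 z) \<subseteq> ball 0 1"
        using z by (simp add: closed_segment_subset)
      then have "((\<lambda>w. div_by_z f w * G w) has_contour_integral (P z - P 0)) (linepath 0 z)"
        using contour_integral_primitive[OF P valid_path_linepath] by simp
      then have "((\<lambda>x. div_by_z f (linepath 0 z x) * G (linepath 0 z x) * z) has_integral (P z - P 0)) {0..1}"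
        by (simp add: has_contour_integral_linepath)
      then have "((\<lambda>x. f (linepath 0 z x) * G (linepath 0 z x) / linepath 0 z x * z) has_integral (P z - P 0)) {0..1}"
        by (rule has_integral_spike_finite[of "{0}", rotated 2]) (use False in \<open>auto simp: div_by_z_def linepath_def\<close>)
      then show ?thesis
        by (simp add: has_contour_integral_linepath)
    qed simp
  qed
qed

lemma
  assumes "f holomorphic_on ball 0 1" and "f 0 = 0" and "G holomorphic_on ball 0 1"
    and z: "z \<in> ball 0 1"
  shows cesaro_op_has_contour_integral:
      "((\<lambda>w. f w * G w / w) has_contour_integral cesaro_op G f z) (linepath 0 z)"
    and cesaro_op_has_field_derivative:
      "(cesaro_op G f has_field_derivative div_by_z f z * G z) (at z)"
proof -
  obtain P where P': "\<And>z. z \<in> ball 0 1 \<Longrightarrow> (P has_field_derivative div_by_z f z * G z) (at z)"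
    and P: "\<And>z. z \<in> ball 0 1 \<Longrightarrow> ((\<lambda>w. f w * G w / w) has_contour_integral (P z - P 0)) (linepath 0 z)"
    using cesaro_op_primitive[OF assms(1-3)] by blast
  have eq: "cesaro_op G f w = P w - P 0" if "w \<in> ball 0 1" for w
    unfolding cesaro_op_def using P[OF that] by (rule contour_integral_unique)
  show "((\<lambda>w. f w * G w / w) has_contour_integral cesaro_op G f z) (linepath 0 z)"
    using P[OF z] eq[OF z] by simp
  have "((\<lambda>w. P w - P 0) has_field_derivative div_by_z f z * G z) (at z)"
    using P'[OF z] by (auto intro!: derivative_eq_intros)
  then show "(cesaro_op G f has_field_derivative div_by_z f z * G z) (at z)"
    by (rule has_field_derivative_transform_within_open[OF _ open_ball z]) (simp add: eq)
qed

lemma deriv_cesaro_op: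
  assumes "f holomorphic_on ball 0 1" and "f 0 = 0" and "G holomorphic_on ball 0 1"
    and "z \<in> ball 0 1"
  shows "deriv (cesaro_op G f) z = div_by_z f z * G z"
  using cesaro_op_has_field_derivative[OF assms] by (rule DERIV_imp_deriv)

lemma holomorphic_cesaro_op:
  assumes "f holomorphic_on ball 0 1" and "f 0 = 0" and "G holomorphic_on ball 0 1"
  shows "cesaro_op G f holomorphic_on ball 0 1"
  using cesaro_op_has_field_derivative[OF assms] holomorphic_on_open[OF open_ball] by blast

lemma cesaro_op_linear:
  assumes "f holomorphic_on ball 0 1" "f 0 = 0" "g holomorphic_on ball 0 1" "g 0 = 0"
    and holG: "G holomorphic_on ball 0 1" and z: "z \<in> ball 0 1"
  shows "cesaro_op G (\<lambda>w. c * f w + d * g w) z = c * cesaro_op G f z + d * cesaro_op G g z"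
proof -
  have "((\<lambda>w. c * (f w * G w / w) + d * (g w * G w / w)) has_contour_integral
          (c * cesaro_op G f z + d * cesaro_op G g z)) (linepath 0 z)"
    by (intro has_contour_integral_add has_contour_integral_lmul
        cesaro_op_has_contour_integral[OF assms(1,2) holG z] cesaro_op_has_contour_integral[OF assms(3,4) holG z])
  moreover have "(\<lambda>w. c * (f w * G w / w) + d * (g w * G w / w)) = (\<lambda>w. (c * f w + d * g w) * G w / w)"
    by (auto simp: fun_eq_iff algebra_simps add_divide_distrib)
  ultimately have "((\<lambda>w. (c * f w + d * g w) * G w / w) has_contour_integral
          (c * cesaro_op G f z + d * cesaro_op G g z)) (linepath 0 z)"
    by simp
  then show ?thesis
    unfolding cesaro_op_def[of G "\<lambda>w. c * f w + d * g w"] by (rule contour_integral_unique)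
qed

lemma deriv_cesaro_op_diff:
  assumes holf: "f holomorphic_on ball 0 1" "f 0 = 0" and holg: "g holomorphic_on ball 0 1" "g 0 = 0"
    and "G holomorphic_on ball 0 1" and "z \<in> ball 0 1"
  shows "deriv (cesaro_op G f - cesaro_op G g) z = div_by_z (\<lambda>w. f w - g w) z * G z"
proof -
  have "((\<lambda>w. cesaro_op G f w - cesaro_op G g w) has_field_derivative
          div_by_z f z * G z - div_by_z g z * G z) (at z)"
    using assms by (intro DERIV_diff cesaro_op_has_field_derivative)
  then show ?thesis
    by (simp add: fun_diff_def DERIV_imp_deriv div_by_z_diff[OF holf(1) holg(1)] left_diff_distrib)
qed

text \<open>Montel's theorem: the growth bound makes the sequence locally bounded.\<close>
lemma growth_bounded_sequence_locally_uniform_subseq: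
  fixes f :: "nat \<Rightarrow> complex \<Rightarrow> complex"
  assumes hol: "\<And>n. f n holomorphic_on ball 0 1" and f0: "\<And>n. f n 0 = 0"
    and growth: "\<And>n w. w \<in> ball 0 1 \<Longrightarrow> norm (f n w) \<le> K * (1 - norm w) powr (-\<gamma>)"
  obtains r g where "strict_mono r" "g holomorphic_on ball 0 1" "g 0 = 0"
    "\<And>w. w \<in> ball 0 1 \<Longrightarrow> norm (g w) \<le> K * (1 - norm w) powr (-\<gamma>)"
    "\<And>S. compact S \<Longrightarrow> S \<subseteq> ball 0 1 \<Longrightarrow> uniform_limit S (f \<circ> r) g sequentially"
proof -
  have locally_bounded: "\<exists>B. \<forall>h\<in>range f. \<forall>z\<in>S. norm (h z) \<le> B" if S: "compact S" "S \<subseteq> ball 0 1" for S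
  proof -
    have "continuous_on S (\<lambda>z. K * (1 - norm z) powr (-\<gamma>))"
      using S(2) by (auto intro!: continuous_intros)
    then have "bounded ((\<lambda>z. K * (1 - norm z) powr (-\<gamma>)) ` S)"
      using S(1) by (intro compact_imp_bounded compact_continuous_image)
    then obtain B where B: "\<And>z. z \<in> S \<Longrightarrow> norm (K * (1 - norm z) powr (-\<gamma>)) \<le> B"
      unfolding bounded_iff by blast
    have "norm (f n z) \<le> B" if "z \<in> S" for n z
      using growth[of z n] B[OF that] S(2) that by fastforce
    then show ?thesis
      by blast
  qed
  have hol_range: "h holomorphic_on ball 0 1" if "h \<in> range f" for h
    using hol that by blast
  obtain g r where "g holomorphic_on ball 0 1" "strict_mono r"
    and lim: "\<And>w. w \<in> ball 0 1 \<Longrightarrow> (\<lambda>n. f (r n) w) \<longlonglongrightarrow> g w"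
    and "\<And>S. compact S \<Longrightarrow> S \<subseteq> ball 0 1 \<Longrightarrow> uniform_limit S (f \<circ> r) g sequentially"
    using Montel[OF open_ball hol_range locally_bounded order_refl] by blast
  moreover have "g 0 = 0"
    using LIMSEQ_unique[OF lim[of 0]] f0 by simp
  moreover have "norm (g w) \<le> K * (1 - norm w) powr (-\<gamma>)" if "w \<in> ball 0 1" for w
    using LIMSEQ_le_const2[OF tendsto_norm[OF lim[OF that]]] growth[OF that] by blast
  ultimately show ?thesis
    using that by blast
qed

locale cesaro_symbol =
  fixes \<alpha> \<gamma> \<beta> C :: real and G :: "complex \<Rightarrow> complex"
  assumes alpha_pos: "0 < \<alpha>" and gamma_pos: "0 < \<gamma>" and alpha_le: "\<alpha> \<le> \<gamma> + 1"
    and beta_nonneg: "0 \<le> \<beta>" and exponent_gap: "\<gamma> + \<beta> < \<alpha>"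
    and holomorphic_G: "G holomorphic_on ball 0 1"
    and growth_G: "\<And>w. w \<in> ball 0 1 \<Longrightarrow> norm (G w) \<le> C * (1 - norm w) powr (-\<beta>)"
begin

lemma C_nonneg: "0 \<le> C"
  using growth_G[of 0] by simp (meson norm_ge_zero order_trans)

lemma weighted_integrand_le_growth:
  assumes hol: "d holomorphic_on ball 0 1" and d0: "d 0 = 0"
    and growth: "\<And>w. w \<in> ball 0 1 \<Longrightarrow> norm (d w) \<le> K * (1 - norm w) powr (-\<gamma>)"
    and z: "z \<in> ball 0 1"
  shows "(1 - (norm z)\<^sup>2) powr \<alpha> * norm (div_by_z d z * G z)
           \<le> 2 powr (\<alpha> + \<gamma> + 1) * K * C * (1 - norm z) powr (\<alpha> - \<gamma> - \<beta>)"
proof -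
  have K: "0 \<le> K"
    using growth[of 0] d0 by simp
  have "(1 - (norm z)\<^sup>2) powr \<alpha> * norm (div_by_z d z * G z)
        \<le> (2 powr \<alpha> * (1 - norm z) powr \<alpha>)
           * ((2 powr (\<gamma> + 1) * K * (1 - norm z) powr (-\<gamma>)) * (C * (1 - norm z) powr (-\<beta>)))"
    unfolding norm_mult using z K alpha_pos gamma_pos growth_G[OF z]
    by (intro mult_mono powr_one_minus_norm_sq_bounds(1) norm_div_by_z_le_growth[OF hol d0 _ growth]) auto
  also have "\<dots> = 2 powr (\<alpha> + \<gamma> + 1) * K * C * (1 - norm z) powr (\<alpha> - \<gamma> - \<beta>)"
    by (simp add: powr_add powr_diff powr_minus field_simps)
  finally show ?thesis .
qed

lemma weighted_integrand_le_sup: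
  assumes hol: "d holomorphic_on ball 0 1" and d0: "d 0 = 0" and R: "R < 1"
    and bound: "\<And>w. norm w \<le> (1 + R) / 2 \<Longrightarrow> norm (d w) \<le> \<delta>"
    and z: "norm z \<le> R"
  shows "(1 - (norm z)\<^sup>2) powr \<alpha> * norm (div_by_z d z * G z) \<le> 2 * \<delta> * (C * (1 - R) powr (-\<beta>))"
proof -
  have z1: "z \<in> ball 0 1"
    using z R by simp
  have \<delta>: "0 \<le> \<delta>"
    using bound[of 0] d0 z norm_ge_zero[of z] by simp
  have "0 \<le> 1 - (norm z)\<^sup>2"
    using z1 by (simp add: power_le_one)
  have "norm (G z) \<le> C * (1 - norm z) powr (-\<beta>)"
    by (rule growth_G[OF z1])
  also have "\<dots> \<le> C * (1 - R) powr (-\<beta>)"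
    using z R beta_nonneg C_nonneg by (intro mult_left_mono powr_mono2') auto
  finally have G: "norm (G z) \<le> C * (1 - R) powr (-\<beta>)" .
  have "norm (div_by_z d z) \<le> 2 * \<delta>"
    using z R by (intro norm_div_by_z_le_twice[OF hol d0] bound) auto
  with G have "(1 - (norm z)\<^sup>2) powr \<alpha> * norm (div_by_z d z * G z) \<le> 1 * (2 * \<delta> * (C * (1 - R) powr (-\<beta>)))"
    unfolding norm_mult using \<open>0 \<le> 1 - (norm z)\<^sup>2\<close> \<delta> alpha_pos by (intro mult_mono powr_le1) auto
  then show ?thesis
    by simp
qed

lemma cesaro_op_in_bloch0:
  assumes hol: "f holomorphic_on ball 0 1" and f0: "f 0 = 0"
    and growth: "\<And>w. w \<in> ball 0 1 \<Longrightarrow> norm (f w) \<le> K * (1 - norm w) powr (-\<gamma>)"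
  shows "cesaro_op G f \<in> bloch0_space \<alpha>"
proof -
  have "(1 - (norm z)\<^sup>2) powr \<alpha> * norm (deriv (cesaro_op G f) z) \<le> 2 powr (\<alpha> + \<gamma> + 1) * K * C"
    if z: "z \<in> ball 0 1" for z
  proof -
    have K: "0 \<le> K"
      using growth[of 0] f0 by simp
    have "(1 - (norm z)\<^sup>2) powr \<alpha> * norm (deriv (cesaro_op G f) z)
          \<le> 2 powr (\<alpha> + \<gamma> + 1) * K * C * (1 - norm z) powr (\<alpha> - \<gamma> - \<beta>)"
      using weighted_integrand_le_growth[OF hol f0 growth z] deriv_cesaro_op[OF hol f0 holomorphic_G z]
      by simp
    also have "\<dots> \<le> 2 powr (\<alpha> + \<gamma> + 1) * K * C * 1"
      using z exponent_gap K C_nonneg by (intro mult_left_mono powr_le1) auto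
    finally show ?thesis
      by simp
  qed
  then have "bdd_above ((\<lambda>z. (1 - (norm z)\<^sup>2) powr \<alpha> * norm (deriv (cesaro_op G f) z)) ` ball 0 1)"
    by (rule bdd_aboveI2)
  then show ?thesis
    using holomorphic_cesaro_op[OF hol f0 holomorphic_G]
    by (simp add: bloch0_space_def bloch_space_def cesaro_op_def)
qed

lemma weighted_integrand_le_max:
  assumes hol: "d holomorphic_on ball 0 1" and d0: "d 0 = 0"
    and growth: "\<And>w. w \<in> ball 0 1 \<Longrightarrow> norm (d w) \<le> K * (1 - norm w) powr (-\<gamma>)"
    and s: "0 < s" "s < 1" and near: "\<And>w. norm w \<le> 1 - s / 2 \<Longrightarrow> norm (d w) \<le> \<delta>"
    and z: "z \<in> ball 0 1"
  shows "(1 - (norm z)\<^sup>2) powr \<alpha> * norm (div_by_z d z * G z)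
           \<le> max (2 * \<delta> * (C * s powr (-\<beta>))) (2 powr (\<alpha> + \<gamma> + 1) * K * C * s powr (\<alpha> - \<gamma> - \<beta>))"
proof (cases "norm z \<le> 1 - s")
  case True
  have "(1 + (1 - s)) / 2 = 1 - s / 2"
    by simp
  then show ?thesis
    using weighted_integrand_le_sup[OF hol d0 _ _ True] near s by (simp add: le_max_iff_disj)
next
  case False
  have "(1 - (norm z)\<^sup>2) powr \<alpha> * norm (div_by_z d z * G z)
        \<le> 2 powr (\<alpha> + \<gamma> + 1) * K * C * (1 - norm z) powr (\<alpha> - \<gamma> - \<beta>)"
    by (rule weighted_integrand_le_growth[OF hol d0 growth z])
  also have "\<dots> \<le> 2 powr (\<alpha> + \<gamma> + 1) * K * C * s powr (\<alpha> - \<gamma> - \<beta>)"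
    using False z exponent_gap C_nonneg growth[of 0] d0
    by (intro mult_left_mono powr_mono2) auto
  finally show ?thesis
    by (simp add: le_max_iff_disj)
qed

text \<open>Near the boundary the weighted integrand is small by the gap \<open>\<gamma> + \<beta> < \<alpha>\<close>;
  on the remaining compact disc the convergence is uniform.\<close>
lemma bloch_norm_cesaro_op_diff_tendsto:
  assumes hol: "\<And>n. f n holomorphic_on ball 0 1" "g holomorphic_on ball 0 1"
    and vanish: "\<And>n. f n 0 = 0" "g 0 = 0"
    and growth: "\<And>n w. w \<in> ball 0 1 \<Longrightarrow> norm (f n w) \<le> K * (1 - norm w) powr (-\<gamma>)"
      "\<And>w. w \<in> ball 0 1 \<Longrightarrow> norm (g w) \<le> K * (1 - norm w) powr (-\<gamma>)"
    and lim: "\<And>S. compact S \<Longrightarrow> S \<subseteq> ball 0 1 \<Longrightarrow> uniform_limit S f g sequentially"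
  shows "(\<lambda>n. bloch_norm \<alpha> (cesaro_op G (f n) - cesaro_op G g)) \<longlonglongrightarrow> 0"
proof (rule tendstoI)
  fix \<epsilon> :: real assume \<epsilon>: "\<epsilon> > 0"
  define A where "A = 2 powr (\<alpha> + \<gamma> + 1) * (2 * K) * C"
  have "((\<lambda>s. A * s powr (\<alpha> - \<gamma> - \<beta>)) \<longlongrightarrow> A * 0) (at_right 0)"
    using exponent_gap
    by (intro tendsto_mult tendsto_const tendsto_zero_powrI tendsto_ident_at
        eventually_mono[OF eventually_at_right_less]) auto
  from order_tendstoD(2)[OF this, of "\<epsilon> / 2"]
  have "\<forall>\<^sub>F s in at_right 0. A * s powr (\<alpha> - \<gamma> - \<beta>) < \<epsilon> / 2 \<and> s \<in> {0<..<1}"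
    using \<epsilon> eventually_at_right_real[of 0 1] by (simp add: eventually_conj)
  then obtain s where tail: "A * s powr (\<alpha> - \<gamma> - \<beta>) < \<epsilon> / 2" and s: "0 < s" "s < 1"
    using eventually_happens'[OF trivial_limit_at_right_real] by auto
  define D where "D = C * s powr (-\<beta>)"
  have "0 \<le> D"
    using C_nonneg by (simp add: D_def)
  define \<delta> where "\<delta> = \<epsilon> / (4 * (D + 1))"
  have "\<delta> > 0" and inner: "2 * \<delta> * D \<le> \<epsilon> / 2"
    using \<epsilon> \<open>0 \<le> D\<close> by (simp_all add: \<delta>_def field_simps)
  have "uniform_limit (cball 0 (1 - s / 2)) f g sequentially"
    using s by (intro lim) auto
  from uniform_limitD[OF this \<open>\<delta> > 0\<close>]
  show "\<forall>\<^sub>F n in sequentially. dist (bloch_norm \<alpha> (cesaro_op G (f n) - cesaro_op G g)) 0 < \<epsilon>"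
  proof (rule eventually_mono)
    fix n assume close: "\<forall>w\<in>cball 0 (1 - s / 2). dist (f n w) (g w) < \<delta>"
    define d where "d = (\<lambda>w. f n w - g w)"
    have hol_d: "d holomorphic_on ball 0 1" and d0: "d 0 = 0"
      using hol vanish by (auto simp: d_def intro!: holomorphic_intros)
    have near: "norm (d w) \<le> \<delta>" if "norm w \<le> 1 - s / 2" for w
      using close that by (auto simp: d_def dist_norm less_imp_le)
    have growth_d: "norm (d w) \<le> (2 * K) * (1 - norm w) powr (-\<gamma>)" if "w \<in> ball 0 1" for w
      using norm_triangle_ineq4[of "f n w" "g w"] growth(1)[OF that, of n] growth(2)[OF that]
      by (simp add: d_def)
    have "(1 - (norm z)\<^sup>2) powr \<alpha> * norm (deriv (cesaro_op G (f n) - cesaro_op G g) z) \<le> \<epsilon> / 2"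
      if z: "z \<in> ball 0 1" for z
    proof -
      have "deriv (cesaro_op G (f n) - cesaro_op G g) z = div_by_z d z * G z"
        unfolding d_def using hol(1)[of n] vanish(1)[of n] hol(2) vanish(2) holomorphic_G z
        by (rule deriv_cesaro_op_diff)
      then show ?thesis
        using weighted_integrand_le_max[OF hol_d d0 growth_d s near z] inner tail
        by (simp add: A_def D_def mult_ac)
    qed
    from bloch_norm_le[OF this] show "dist (bloch_norm \<alpha> (cesaro_op G (f n) - cesaro_op G g)) 0 < \<epsilon>"
      using \<epsilon> by simp
  qed
qed

theorem compact_linear_operator_cesaro_op:
  "compact_linear_operator_on (bloch0_space \<alpha>) (bloch_norm \<alpha>) (cesaro_op G)"
  unfolding compact_linear_operator_on_def
proof (intro conjI ballI allI impI)
  fix f assume f: "f \<in> bloch0_space \<alpha>"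
  then show "cesaro_op G f \<in> bloch0_space \<alpha>"
    using bloch0_growth[OF f less_imp_le[OF alpha_pos] alpha_le gamma_pos] f
    by (intro cesaro_op_in_bloch0[where K="bloch_norm \<alpha> f / \<gamma>"]) (auto simp: bloch0_space_def bloch_space_def)
next
  fix f g and c d z :: complex
  assume "f \<in> bloch0_space \<alpha>" "g \<in> bloch0_space \<alpha>" "z \<in> ball 0 1"
  then show "cesaro_op G (\<lambda>w. c * f w + d * g w) z = c * cesaro_op G f z + d * cesaro_op G g z"
    using holomorphic_G by (intro cesaro_op_linear) (auto simp: bloch0_space_def bloch_space_def)
next
  fix fs :: "nat \<Rightarrow> complex \<Rightarrow> complex"
  assume "(\<forall>n. fs n \<in> bloch0_space \<alpha>) \<and> bdd_above (range (\<lambda>n. bloch_norm \<alpha> (fs n)))"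
  then obtain M where fs: "\<And>n. fs n \<in> bloch0_space \<alpha>" and M: "\<And>n. bloch_norm \<alpha> (fs n) \<le> M"
    unfolding bdd_above_def by blast
  have hol: "\<And>n. fs n holomorphic_on ball 0 1" and vanish: "\<And>n. fs n 0 = 0"
    using fs by (auto simp: bloch0_space_def bloch_space_def)
  have growth: "norm (fs n w) \<le> M / \<gamma> * (1 - norm w) powr (-\<gamma>)" if "w \<in> ball 0 1" for n w
  proof -
    have "norm (fs n w) \<le> bloch_norm \<alpha> (fs n) / \<gamma> * (1 - norm w) powr (-\<gamma>)"
      by (rule bloch0_growth[OF fs less_imp_le[OF alpha_pos] alpha_le gamma_pos that])
    also have "\<dots> \<le> M / \<gamma> * (1 - norm w) powr (-\<gamma>)"
      using M[of n] gamma_pos by (intro mult_right_mono divide_right_mono) auto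
    finally show ?thesis .
  qed
  obtain r g where "strict_mono r" and g: "g holomorphic_on ball 0 1" "g 0 = 0"
    "\<And>w. w \<in> ball 0 1 \<Longrightarrow> norm (g w) \<le> M / \<gamma> * (1 - norm w) powr (-\<gamma>)"
    and lim: "\<And>S. compact S \<Longrightarrow> S \<subseteq> ball 0 1 \<Longrightarrow> uniform_limit S (fs \<circ> r) g sequentially"
    using growth_bounded_sequence_locally_uniform_subseq[where f=fs, OF hol vanish growth] by blast
  moreover have "cesaro_op G g \<in> bloch0_space \<alpha>"
    using g by (rule cesaro_op_in_bloch0)
  moreover have "(\<lambda>n. bloch_norm \<alpha> (cesaro_op G (fs (r n)) - cesaro_op G g)) \<longlonglongrightarrow> 0"
    using bloch_norm_cesaro_op_diff_tendsto[OF _ g(1) _ g(2) _ g(3) lim] hol vanish growth by (simp add: o_def)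
  ultimately show "\<exists>r F. strict_mono r \<and> F \<in> bloch0_space \<alpha> \<and>
                     (\<lambda>n. bloch_norm \<alpha> (cesaro_op G (fs (r n)) - F)) \<longlonglongrightarrow> 0"
    by blast
qed

end

theorem corollary3p1:
  fixes \<alpha> \<beta> :: real and k :: nat and a b :: "nat \<Rightarrow> complex" and h :: "complex \<Rightarrow> complex"
  assumes "\<alpha> > 0"
    and "(\<beta> < \<alpha> \<and> \<alpha> < 1) \<or> (\<beta> < 1 \<and> 1 < \<alpha>) \<or> (\<beta> < \<alpha> \<and> \<alpha> = 1)"
    and "k \<ge> 1"
    and "inj_on b {1..k}"
    and "\<forall>j\<in>{1..k}. norm (b j) = 1"
    and "\<forall>j\<in>{1..k}. a j \<noteq> 0"
    and "h holomorphic_on ball 0 1"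
    and "bounded (h ` ball 0 1)"
  shows "compact_linear_operator_on (bloch0_space \<alpha>) (bloch_norm \<alpha>)
           (cesaro_op (g_beta \<beta> k a b h))"
proof -
  define \<beta>' where "\<beta>' = max \<beta> 0"
  have "0 \<le> \<beta>'" "\<beta>' < \<alpha>" "\<beta>' < 1"
    using assms(1,2) by (auto simp: \<beta>'_def)
  text \<open>Any \<open>\<gamma>\<close> strictly between \<open>max (\<alpha> - 1) 0\<close> and \<open>\<alpha> - \<beta>'\<close> would do.\<close>
  define \<gamma> where "\<gamma> = (max (\<alpha> - 1) 0 + (\<alpha> - \<beta>')) / 2"
  have \<gamma>: "0 < \<gamma>" "\<alpha> \<le> \<gamma> + 1" "\<gamma> + \<beta>' < \<alpha>"
    using \<open>0 \<le> \<beta>'\<close> \<open>\<beta>' < \<alpha>\<close> \<open>\<beta>' < 1\<close> assms(1) unfolding \<gamma>_def max_def by (auto simp: field_simps)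
  have b: "\<forall>j\<in>{1..k}. norm (b j) \<le> 1"
    using assms(5) by simp
  obtain C where "\<And>w. w \<in> ball 0 1 \<Longrightarrow> norm (g_beta \<beta> k a b h w) \<le> C * (1 - norm w) powr (-\<beta>')"
    using g_beta_growth[OF b assms(8)] unfolding \<beta>'_def by blast
  then interpret cesaro_symbol \<alpha> \<gamma> \<beta>' C "g_beta \<beta> k a b h"
    using assms(1) \<gamma> \<open>0 \<le> \<beta>'\<close> holomorphic_g_beta[OF b assms(7)]
    by unfold_locales simp_all
  show ?thesis
    by (rule compact_linear_operator_cesaro_op)
qed

end
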